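(* Let $\pi:P\to M$ be a principal fibre bundle with group $G=P^{-1}P$, in the setting described in the context. For a connection $\nabla$ in the groupoid $PP^{-1}$, define its connection form $\omega$ by $\omega(u,v):=u^{-1}\big(\nabla(\pi(u),\pi(v))\cdot v\big)\in G$ for neighbours $u\sim v$ in $P$; equivalently $u\cdot\omega(u,v)=\nabla(\pi(u),\pi(v))\cdot v$. Then the assignment $\nabla\mapsto\omega$ is a bijection between the set of connections $\nabla$ in $PP^{-1}$ and the set of $G$-valued 1-forms $\omega$ on $P$ satisfying the two conditions (i) $\omega(xg,y)=g^{-1}\omega(x,y)$ whenever $x\sim y$ in $P$ and $g\in G$ is such that also $xg\sim y$; (ii) $\omega(xg,yg)=g^{-1}\omega(x,y)g$ for all $x\sim y$ in $P$ and all $g\in G$.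
   Context: Setting (all calculations may be done as in sets, the paper works internally in a left exact category). Let $\Phi$ be a groupoid whose object set contains a set $M$ and an object $*\notin M$. Let $P$ be the set of arrows of $\Phi$ with domain $*$ and codomain in $M$, and $\pi:P\to M$ the codomain map. The group $G=P^{-1}P:=\Phi( *,* )$ acts on $P$ from the right by precomposition ($x\cdot g=xg$); this action is free and transitive on each fibre $\pi^{-1}(a)$. For $x,z$ in the same fibre, $x^{-1}z\in G$ is the composite in $\Phi$. $PP^{-1}$ denotes the full subgroupoid of $\Phi$ on the objects $M$; its arrows $a\to b$ are the composites $yx^{-1}$ with $\pi(x)=a,\pi(y)=b$, and it acts on $P$ from the left by postcomposition. Composition is written right to left. Both $M$ and $P$ carry a reflexive symmetric "neighbour" relation $\sim$; $\pi$ preserves $\sim$; an infinitesimal $k$-simplex is a $(k+1)$-tuple of mutual neighbours; for every infinitesimal $k$-simplex $(a_0,\dots,a_k)$ in $M$ and every $x_0\in\pi^{-1}(a_0)$ there is an infinitesimal $k$-simplex $(x_0,\dots,x_k)$ in $P$ with $\pi(x_i)=a_i$; and the right action of each $g\in G$ preserves $\sim$ on $P$. A connection in $PP^{-1}$ is a map assigning to each pair $a\sim b$ in $M$ an arrow $\nabla(a,b)$ of $PP^{-1}$ from $b$ to $a$, with $\nabla(a,a)=\mathrm{id}_a$ and $\nabla(b,a)=\nabla(a,b)^{-1}$ (a morphism of reflexive symmetric graphs from the neighbour relation on $M$ to $PP^{-1}$). A $G$-valued 1-form on $P$ is a map $\omega$ assigning to each pair $x\sim y$ in $P$ an element $\omega(x,y)\in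 G$, with $\omega(x,x)=e$ and $\omega(y,x)=\omega(x,y)^{-1}$. *)

theory Defs
  imports Main
begin

text \<open>A groupoid given by a set of objects Obj, a set of arrows Arr, domain and
codomain maps, composition (written right to left: cmp g f means g after f,
defined when dm g = cd f), identities and inverses.\<close>

definition groupoid ::
  "'o set \<Rightarrow> 'a set \<Rightarrow> ('a \<Rightarrow> 'o) \<Rightarrow> ('a \<Rightarrow> 'o) \<Rightarrow> ('a \<Rightarrow> 'a \<Rightarrow> 'a)
   \<Rightarrow> ('o \<Rightarrow> 'a) \<Rightarrow> ('a \<Rightarrow> 'a) \<Rightarrow> bool" where
  "groupoid Obj Arr dm cd cmp ide iv \<longleftrightarrow>
     (\<forall>f\<in>Arr. dm f \<in> Obj \<and> cd f \<in> Obj) \<and>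
     (\<forall>f\<in>Arr. \<forall>g\<in>Arr. dm g = cd f \<longrightarrow>
        cmp g f \<in> Arr \<and> dm (cmp g f) = dm f \<and> cd (cmp g f) = cd g) \<and>
     (\<forall>f\<in>Arr. \<forall>g\<in>Arr. \<forall>h\<in>Arr. dm g = cd f \<longrightarrow> dm h = cd g \<longrightarrow>
        cmp h (cmp g f) = cmp (cmp h g) f) \<and>
     (\<forall>a\<in>Obj. ide a \<in> Arr \<and> dm (ide a) = a \<and> cd (ide a) = a) \<and>
     (\<forall>f\<in>Arr. cmp (ide (cd f)) f = f \<and> cmp f (ide (dm f)) = f) \<and>
     (\<forall>f\<in>Arr. iv f \<in> Arr \<and> dm (iv f) = cd f \<and> cd (iv f) = dm f \<and>
        cmp (iv f) f = ide (dm f) \<and> cmp f (iv f) = ide (cd f))"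

text \<open>P: arrows from the base object s (the object *) to objects of M;
G = Phi(s,s).\<close>

definition bundleP :: "'a set \<Rightarrow> ('a \<Rightarrow> 'o) \<Rightarrow> ('a \<Rightarrow> 'o) \<Rightarrow> 'o set \<Rightarrow> 'o \<Rightarrow> 'a set" where
  "bundleP Arr dm cd M s = {x \<in> Arr. dm x = s \<and> cd x \<in> M}"

definition bundleG :: "'a set \<Rightarrow> ('a \<Rightarrow> 'o) \<Rightarrow> ('a \<Rightarrow> 'o) \<Rightarrow> 'o \<Rightarrow> 'a set" where
  "bundleG Arr dm cd s = {g \<in> Arr. dm g = s \<and> cd g = s}"

definition inf_simplex :: "'b set \<Rightarrow> ('b \<Rightarrow> 'b \<Rightarrow> bool) \<Rightarrow> 'b list \<Rightarrow> bool" where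
  "inf_simplex S nb xs \<longleftrightarrow> set xs \<subseteq> S \<and>
     (\<forall>i<length xs. \<forall>j<length xs. nb (xs ! i) (xs ! j))"

text \<open>Standing assumptions of the setting (principal fibre bundle
pi = cd : P \<rightarrow> M with neighbour relations).\<close>

definition bundle_setting ::
  "'o set \<Rightarrow> 'a set \<Rightarrow> ('a \<Rightarrow> 'o) \<Rightarrow> ('a \<Rightarrow> 'o) \<Rightarrow> ('a \<Rightarrow> 'a \<Rightarrow> 'a)
   \<Rightarrow> ('o \<Rightarrow> 'a) \<Rightarrow> ('a \<Rightarrow> 'a) \<Rightarrow> 'o set \<Rightarrow> 'o
   \<Rightarrow> ('o \<Rightarrow> 'o \<Rightarrow> bool) \<Rightarrow> ('a \<Rightarrow> 'a \<Rightarrow> bool) \<Rightarrow> bool" where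
  "bundle_setting Obj Arr dm cd cmp ide iv M s nbM nbP \<longleftrightarrow>
     groupoid Obj Arr dm cd cmp ide iv \<and>
     M \<subseteq> Obj \<and> s \<in> Obj \<and> s \<notin> M \<and>
     \<comment> \<open>pi is surjective (principal fibre bundle)\<close>
     (\<forall>a\<in>M. \<exists>x\<in>bundleP Arr dm cd M s. cd x = a) \<and>
     \<comment> \<open>neighbour relations reflexive and symmetric\<close>
     (\<forall>a\<in>M. nbM a a) \<and> (\<forall>a\<in>M. \<forall>b\<in>M. nbM a b \<longrightarrow> nbM b a) \<and>
     (\<forall>x\<in>bundleP Arr dm cd M s. nbP x x) \<and>
     (\<forall>x\<in>bundleP Arr dm cd M s. \<forall>y\<in>bundleP Arr dm cd M s. nbP x y \<longrightarrow> nbP y x) \<and>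
     \<comment> \<open>pi preserves neighbours\<close>
     (\<forall>x\<in>bundleP Arr dm cd M s. \<forall>y\<in>bundleP Arr dm cd M s.
        nbP x y \<longrightarrow> nbM (cd x) (cd y)) \<and>
     \<comment> \<open>lifting of infinitesimal k-simplices with prescribed first vertex\<close>
     (\<forall>as x0. inf_simplex M nbM as \<longrightarrow> as \<noteq> [] \<longrightarrow>
        x0 \<in> bundleP Arr dm cd M s \<longrightarrow> cd x0 = as ! 0 \<longrightarrow>
        (\<exists>xs. length xs = length as \<and> inf_simplex (bundleP Arr dm cd M s) nbP xs \<and>
              xs ! 0 = x0 \<and> (\<forall>i<length as. cd (xs ! i) = as ! i))) \<and>
     \<comment> \<open>the right action of G preserves neighbours\<close>
     (\<forall>x\<in>bundleP Arr dm cd M s. \<forall>y\<in>bundleP Arr dm cd M s. \<forall>g\<in>bundleG Arr dm cd s.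
        nbP x y \<longrightarrow> nbP (cmp x g) (cmp y g))"

text \<open>Connections in PP^{-1}: nabla a b is an arrow b \<rightarrow> a for a ~ b in M;
values outside this domain are fixed to undefined (so that maps are
determined by their values on neighbour pairs).\<close>

definition connections ::
  "'a set \<Rightarrow> ('a \<Rightarrow> 'o) \<Rightarrow> ('a \<Rightarrow> 'o) \<Rightarrow> ('o \<Rightarrow> 'a) \<Rightarrow> ('a \<Rightarrow> 'a)
   \<Rightarrow> 'o set \<Rightarrow> ('o \<Rightarrow> 'o \<Rightarrow> bool) \<Rightarrow> ('o \<Rightarrow> 'o \<Rightarrow> 'a) set" where
  "connections Arr dm cd ide iv M nbM =
     {nab. (\<forall>a\<in>M. \<forall>b\<in>M. nbM a b \<longrightarrow>
              nab a b \<in> Arr \<and> dm (nab a b) = b \<and> cd (nab a b) = a) \<and>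
           (\<forall>a\<in>M. nab a a = ide a) \<and>
           (\<forall>a\<in>M. \<forall>b\<in>M. nbM a b \<longrightarrow> nab b a = iv (nab a b)) \<and>
           (\<forall>a b. \<not> (a \<in> M \<and> b \<in> M \<and> nbM a b) \<longrightarrow> nab a b = undefined)}"

definition equivariant_forms ::
  "'a set \<Rightarrow> ('a \<Rightarrow> 'o) \<Rightarrow> ('a \<Rightarrow> 'o) \<Rightarrow> ('a \<Rightarrow> 'a \<Rightarrow> 'a)
   \<Rightarrow> ('o \<Rightarrow> 'a) \<Rightarrow> ('a \<Rightarrow> 'a) \<Rightarrow> 'o set \<Rightarrow> 'o \<Rightarrow> ('a \<Rightarrow> 'a \<Rightarrow> bool)
   \<Rightarrow> ('a \<Rightarrow> 'a \<Rightarrow> 'a) set" where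
  "equivariant_forms Arr dm cd cmp ide iv M s nbP =
     (let P = bundleP Arr dm cd M s; G = bundleG Arr dm cd s in
     {om. (\<forall>x\<in>P. \<forall>y\<in>P. nbP x y \<longrightarrow> om x y \<in> G) \<and>
          (\<forall>x\<in>P. om x x = ide s) \<and>
          (\<forall>x\<in>P. \<forall>y\<in>P. nbP x y \<longrightarrow> om y x = iv (om x y)) \<and>
          (\<forall>x y. \<not> (x \<in> P \<and> y \<in> P \<and> nbP x y) \<longrightarrow> om x y = undefined) \<and>
          \<comment> \<open>(i)\<close>
          (\<forall>x\<in>P. \<forall>y\<in>P. \<forall>g\<in>G. nbP x y \<longrightarrow> nbP (cmp x g) y \<longrightarrow>
              om (cmp x g) y = cmp (iv g) (om x y)) \<and>
          \<comment> \<open>(ii)\<close>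
          (\<forall>x\<in>P. \<forall>y\<in>P. \<forall>g\<in>G. nbP x y \<longrightarrow>
              om (cmp x g) (cmp y g) = cmp (iv g) (cmp (om x y) g))})"

definition connection_form ::
  "'a set \<Rightarrow> ('a \<Rightarrow> 'o) \<Rightarrow> ('a \<Rightarrow> 'o) \<Rightarrow> ('a \<Rightarrow> 'a \<Rightarrow> 'a) \<Rightarrow> ('a \<Rightarrow> 'a)
   \<Rightarrow> 'o set \<Rightarrow> 'o \<Rightarrow> ('a \<Rightarrow> 'a \<Rightarrow> bool) \<Rightarrow> ('o \<Rightarrow> 'o \<Rightarrow> 'a) \<Rightarrow> ('a \<Rightarrow> 'a \<Rightarrow> 'a)" where
  "connection_form Arr dm cd cmp iv M s nbP nab =
     (\<lambda>u v. if u \<in> bundleP Arr dm cd M s \<and> v \<in> bundleP Arr dm cd M s \<and> nbP u v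
            then cmp (iv u) (cmp (nab (cd u) (cd v)) v) else undefined)"

end

theory Submission
  imports Defs
begin

(*
  For a 1-form \<omega> satisfying (i) and (ii), the arrow x \<omega>(x,y) y\<inverse> of PP\<inverse>, from \<pi> y to
  \<pi> x, depends only on \<pi> x and \<pi> y. If x' ~ y' is another pair over the same points,
  write y' = y h and x' h\<inverse> = x k with h, k \<in> G: condition (ii) and the G-invariance of ~
  pass from (x', y') to (x k, y), and condition (i) from (x k, y) to (x, y). Since every
  pair of neighbours a ~ b in M lifts to neighbours x ~ y in P, setting
  \<nabla>(a,b) := x \<omega>(x,y) y\<inverse> defines a connection, and this construction is inverse to
  \<nabla> \<mapsto> \<omega>: both composites are cancellations in the groupoid.
*)

locale groupoid_structure =
  fixes Obj Arr dm cd cmp ide iv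
  assumes groupoid: "groupoid Obj Arr dm cd cmp ide iv"
begin

lemma dm_in_Obj: "f \<in> Arr \<Longrightarrow> dm f \<in> Obj"
  and cd_in_Obj: "f \<in> Arr \<Longrightarrow> cd f \<in> Obj"
  using groupoid unfolding groupoid_def by blast+

lemma cmp_in_Arr [simp]: "f \<in> Arr \<Longrightarrow> g \<in> Arr \<Longrightarrow> dm g = cd f \<Longrightarrow> cmp g f \<in> Arr"
  and dm_cmp [simp]: "f \<in> Arr \<Longrightarrow> g \<in> Arr \<Longrightarrow> dm g = cd f \<Longrightarrow> dm (cmp g f) = dm f"
  and cd_cmp [simp]: "f \<in> Arr \<Longrightarrow> g \<in> Arr \<Longrightarrow> dm g = cd f \<Longrightarrow> cd (cmp g f) = cd g"
  using groupoid unfolding groupoid_def by blast+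

lemma cmp_assoc [simp]:
  "f \<in> Arr \<Longrightarrow> g \<in> Arr \<Longrightarrow> h \<in> Arr \<Longrightarrow> dm g = cd f \<Longrightarrow> dm h = cd g \<Longrightarrow>
   cmp (cmp h g) f = cmp h (cmp g f)"
  using groupoid unfolding groupoid_def by metis

lemma ide_in_Arr [simp]: "a \<in> Obj \<Longrightarrow> ide a \<in> Arr"
  and dm_ide [simp]: "a \<in> Obj \<Longrightarrow> dm (ide a) = a"
  and cd_ide [simp]: "a \<in> Obj \<Longrightarrow> cd (ide a) = a"
  and cmp_ide_left [simp]: "f \<in> Arr \<Longrightarrow> cd f = a \<Longrightarrow> cmp (ide a) f = f"
  and cmp_ide_right [simp]: "f \<in> Arr \<Longrightarrow> dm f = a \<Longrightarrow> cmp f (ide a) = f"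
  using groupoid unfolding groupoid_def by blast+

lemma iv_in_Arr [simp]: "f \<in> Arr \<Longrightarrow> iv f \<in> Arr"
  and dm_iv [simp]: "f \<in> Arr \<Longrightarrow> dm (iv f) = cd f"
  and cd_iv [simp]: "f \<in> Arr \<Longrightarrow> cd (iv f) = dm f"
  and cmp_iv_left [simp]: "f \<in> Arr \<Longrightarrow> cmp (iv f) f = ide (dm f)"
  and cmp_iv_right [simp]: "f \<in> Arr \<Longrightarrow> cmp f (iv f) = ide (cd f)"
  using groupoid unfolding groupoid_def by blast+

lemma iv_cmp_cancel [simp]:
  assumes "f \<in> Arr" "g \<in> Arr" "dm f = cd g"
  shows "cmp (iv f) (cmp f g) = g"
proof -
  have "cmp (iv f) (cmp f g) = cmp (cmp (iv f) f) g"
    using assms by (intro cmp_assoc[symmetric]) simp_all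
  then show ?thesis
    using assms by (simp add: dm_in_Obj)
qed

lemma cmp_iv_cancel [simp]:
  assumes "f \<in> Arr" "g \<in> Arr" "cd f = cd g"
  shows "cmp f (cmp (iv f) g) = g"
proof -
  have "cmp f (cmp (iv f) g) = cmp (cmp f (iv f)) g"
    using assms by (intro cmp_assoc[symmetric]) simp_all
  then show ?thesis
    using assms by (simp add: cd_in_Obj)
qed

lemma iv_unique:
  assumes "f \<in> Arr" "h \<in> Arr" "dm h = cd f" "cd h = dm f" "cmp h f = ide (dm f)"
  shows "h = iv f"
proof -
  have "h = cmp h (cmp f (iv f))"
    using assms by (simp add: cd_in_Obj)
  also have "\<dots> = cmp (cmp h f) (iv f)"
    using assms by (intro cmp_assoc[symmetric]) simp_all
  also have "\<dots> = iv f"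
    using assms by (simp add: dm_in_Obj)
  finally show ?thesis .
qed

lemma iv_cmp [simp]: "f \<in> Arr \<Longrightarrow> g \<in> Arr \<Longrightarrow> dm g = cd f \<Longrightarrow> iv (cmp g f) = cmp (iv f) (iv g)"
  by (rule iv_unique[symmetric]) (simp_all add: dm_in_Obj)

lemma iv_iv [simp]: "f \<in> Arr \<Longrightarrow> iv (iv f) = f"
  by (rule iv_unique[symmetric]) (simp_all add: dm_in_Obj)

end

locale principal_bundle =
  fixes Obj Arr dm cd cmp ide iv M s nbM nbP
  assumes bundle_setting: "bundle_setting Obj Arr dm cd cmp ide iv M s nbM nbP"

sublocale principal_bundle \<subseteq> groupoid_structure Obj Arr dm cd cmp ide iv
  using bundle_setting unfolding bundle_setting_def by unfold_locales blast

context principal_bundle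
begin

abbreviation "P \<equiv> bundleP Arr dm cd M s"
abbreviation "G \<equiv> bundleG Arr dm cd s"

lemma mem_P: "x \<in> P \<longleftrightarrow> x \<in> Arr \<and> dm x = s \<and> cd x \<in> M"
  unfolding bundleP_def by blast

lemma mem_G: "g \<in> G \<longleftrightarrow> g \<in> Arr \<and> dm g = s \<and> cd g = s"
  unfolding bundleG_def by blast

lemma s_in_Obj [simp]: "s \<in> Obj"
  and M_in_Obj: "a \<in> M \<Longrightarrow> a \<in> Obj"
  and bundle_surj: "a \<in> M \<Longrightarrow> \<exists>x\<in>P. cd x = a"
  and nbM_refl: "a \<in> M \<Longrightarrow> nbM a a"
  and nbM_sym: "a \<in> M \<Longrightarrow> b \<in> M \<Longrightarrow> nbM a b \<Longrightarrow> nbM b a"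
  and nbP_refl: "x \<in> P \<Longrightarrow> nbP x x"
  and nbP_sym: "x \<in> P \<Longrightarrow> y \<in> P \<Longrightarrow> nbP x y \<Longrightarrow> nbP y x"
  and nbP_imp_nbM: "x \<in> P \<Longrightarrow> y \<in> P \<Longrightarrow> nbP x y \<Longrightarrow> nbM (cd x) (cd y)"
  and nbP_right_action:
    "x \<in> P \<Longrightarrow> y \<in> P \<Longrightarrow> g \<in> G \<Longrightarrow> nbP x y \<Longrightarrow> nbP (cmp x g) (cmp y g)"
  and simplex_lift: "inf_simplex M nbM as \<Longrightarrow> as \<noteq> [] \<Longrightarrow> x0 \<in> P \<Longrightarrow> cd x0 = as ! 0 \<Longrightarrow>
    \<exists>xs. length xs = length as \<and> inf_simplex P nbP xs \<and> xs ! 0 = x0 \<and>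
      (\<forall>i<length as. cd (xs ! i) = as ! i)"
  using bundle_setting by (simp_all add: bundle_setting_def subset_iff)

lemma right_action_in_P [simp]: "x \<in> P \<Longrightarrow> g \<in> G \<Longrightarrow> cmp x g \<in> P"
  and cd_right_action [simp]: "x \<in> P \<Longrightarrow> g \<in> G \<Longrightarrow> cd (cmp x g) = cd x"
  by (simp_all add: mem_P mem_G)

lemma fibre_quotient_in_G: "x \<in> P \<Longrightarrow> y \<in> P \<Longrightarrow> cd x = cd y \<Longrightarrow> cmp (iv x) y \<in> G"
  by (simp add: mem_P mem_G)

lemma neighbour_lift:
  assumes ab: "a \<in> M" "b \<in> M" "nbM a b" and x: "x \<in> P" "cd x = a"
  obtains y where "y \<in> P" "cd y = b" "nbP x y"
proof -
  have "inf_simplex M nbM [a, b]"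
    unfolding inf_simplex_def
  proof (intro conjI allI impI)
    show "set [a, b] \<subseteq> M"
      using ab by simp
    fix i j
    assume "i < length [a, b]" "j < length [a, b]"
    then show "nbM ([a, b] ! i) ([a, b] ! j)"
      using ab nbM_refl nbM_sym[OF ab] by (auto simp: less_Suc_eq)
  qed
  from simplex_lift[OF this _ x(1)] x(2) obtain xs where xs: "length xs = 2" "inf_simplex P nbP xs"
      "xs ! 0 = x" "\<forall>i<2. cd (xs ! i) = [a, b] ! i"
    by (metis list.distinct(1) length_Cons list.size(3) numeral_2_eq_2 nth_Cons_0)
  then have "xs ! 1 \<in> P" "nbP (xs ! 0) (xs ! 1)" "cd (xs ! 1) = b"
    unfolding inf_simplex_def by auto
  with xs(3) show thesis
    using that by blast
qed

lemma neighbour_pair_lift: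
  assumes "a \<in> M" "b \<in> M" "nbM a b"
  obtains x y where "x \<in> P" "y \<in> P" "nbP x y" "cd x = a" "cd y = b"
  by (metis assms bundle_surj neighbour_lift)

abbreviation "Conns \<equiv> connections Arr dm cd ide iv M nbM"
abbreviation "Forms \<equiv> equivariant_forms Arr dm cd cmp ide iv M s nbP"
abbreviation "form_of \<equiv> connection_form Arr dm cd cmp iv M s nbP"

lemma connectionsI:
  assumes "\<And>a b. a \<in> M \<Longrightarrow> b \<in> M \<Longrightarrow> nbM a b \<Longrightarrow>
      nab a b \<in> Arr \<and> dm (nab a b) = b \<and> cd (nab a b) = a"
    and "\<And>a. a \<in> M \<Longrightarrow> nab a a = ide a"
    and "\<And>a b. a \<in> M \<Longrightarrow> b \<in> M \<Longrightarrow> nbM a b \<Longrightarrow> nab b a = iv (nab a b)"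
    and "\<And>a b. \<not> (a \<in> M \<and> b \<in> M \<and> nbM a b) \<Longrightarrow> nab a b = undefined"
  shows "nab \<in> Conns"
  using assms unfolding connections_def by blast

lemma connection_arrow:
  assumes "nab \<in> Conns" "a \<in> M" "b \<in> M" "nbM a b"
  shows "nab a b \<in> Arr" "dm (nab a b) = b" "cd (nab a b) = a"
  using assms unfolding connections_def by auto

lemma connection_ide: "nab \<in> Conns \<Longrightarrow> a \<in> M \<Longrightarrow> nab a a = ide a"
  and connection_sym: "nab \<in> Conns \<Longrightarrow> a \<in> M \<Longrightarrow> b \<in> M \<Longrightarrow> nbM a b \<Longrightarrow> nab b a = iv (nab a b)"
  and connection_undefined: "nab \<in> Conns \<Longrightarrow> \<not> (a \<in> M \<and> b \<in> M \<and> nbM a b) \<Longrightarrow> nab a b = undefined"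
  unfolding connections_def by auto

lemma equivariant_formsI:
  assumes "\<And>x y. x \<in> P \<Longrightarrow> y \<in> P \<Longrightarrow> nbP x y \<Longrightarrow> om x y \<in> G"
    and "\<And>x. x \<in> P \<Longrightarrow> om x x = ide s"
    and "\<And>x y. x \<in> P \<Longrightarrow> y \<in> P \<Longrightarrow> nbP x y \<Longrightarrow> om y x = iv (om x y)"
    and "\<And>x y. \<not> (x \<in> P \<and> y \<in> P \<and> nbP x y) \<Longrightarrow> om x y = undefined"
    and "\<And>x y g. x \<in> P \<Longrightarrow> y \<in> P \<Longrightarrow> g \<in> G \<Longrightarrow> nbP x y \<Longrightarrow> nbP (cmp x g) y \<Longrightarrow>
      om (cmp x g) y = cmp (iv g) (om x y)"
    and "\<And>x y g. x \<in> P \<Longrightarrow> y \<in> P \<Longrightarrow> g \<in> G \<Longrightarrow> nbP x y \<Longrightarrow>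
      om (cmp x g) (cmp y g) = cmp (iv g) (cmp (om x y) g)"
  shows "om \<in> Forms"
  using assms unfolding equivariant_forms_def Let_def by blast

lemma form_in_G: "om \<in> Forms \<Longrightarrow> x \<in> P \<Longrightarrow> y \<in> P \<Longrightarrow> nbP x y \<Longrightarrow> om x y \<in> G"
  and form_refl: "om \<in> Forms \<Longrightarrow> x \<in> P \<Longrightarrow> om x x = ide s"
  and form_sym: "om \<in> Forms \<Longrightarrow> x \<in> P \<Longrightarrow> y \<in> P \<Longrightarrow> nbP x y \<Longrightarrow> om y x = iv (om x y)"
  and form_undefined: "om \<in> Forms \<Longrightarrow> \<not> (x \<in> P \<and> y \<in> P \<and> nbP x y) \<Longrightarrow> om x y = undefined"
  and form_translate_left: "om \<in> Forms \<Longrightarrow> x \<in> P \<Longrightarrow> y \<in> P \<Longrightarrow> g \<in> G \<Longrightarrow> nbP x y \<Longrightarrow>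
    nbP (cmp x g) y \<Longrightarrow> om (cmp x g) y = cmp (iv g) (om x y)"
  and form_translate_both: "om \<in> Forms \<Longrightarrow> x \<in> P \<Longrightarrow> y \<in> P \<Longrightarrow> g \<in> G \<Longrightarrow> nbP x y \<Longrightarrow>
    om (cmp x g) (cmp y g) = cmp (iv g) (cmp (om x y) g)"
  unfolding equivariant_forms_def Let_def by auto

lemma connection_form_apply:
  "x \<in> P \<Longrightarrow> y \<in> P \<Longrightarrow> nbP x y \<Longrightarrow> form_of nab x y = cmp (iv x) (cmp (nab (cd x) (cd y)) y)"
  and connection_form_undefined:
  "\<not> (x \<in> P \<and> y \<in> P \<and> nbP x y) \<Longrightarrow> form_of nab x y = undefined"
  unfolding connection_form_def by auto

lemma connection_arrow_lift:
  assumes nab: "nab \<in> Conns" and xy: "x \<in> P" "y \<in> P" "nbP x y"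
  shows "nab (cd x) (cd y) \<in> Arr" "dm (nab (cd x) (cd y)) = cd y" "cd (nab (cd x) (cd y)) = cd x"
proof -
  have "cd x \<in> M" "cd y \<in> M"
    using xy by (simp_all add: mem_P)
  then show "nab (cd x) (cd y) \<in> Arr" "dm (nab (cd x) (cd y)) = cd y" "cd (nab (cd x) (cd y)) = cd x"
    using connection_arrow[OF nab _ _ nbP_imp_nbM[OF xy]] by simp_all
qed

lemma connection_form_in_equivariant_forms:
  assumes nab: "nab \<in> Conns"
  shows "form_of nab \<in> Forms"
proof (rule equivariant_formsI)
  fix x y
  assume xy: "x \<in> P" "y \<in> P" "nbP x y"
  then show "form_of nab x y \<in> G"
    using connection_arrow_lift[OF nab xy] by (simp add: connection_form_apply mem_P mem_G)
next
  fix x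
  assume x: "x \<in> P"
  then show "form_of nab x x = ide s"
    using connection_ide[OF nab] nbP_refl[OF x] by (simp add: connection_form_apply mem_P M_in_Obj)
next
  fix x y
  assume xy: "x \<in> P" "y \<in> P" "nbP x y"
  have "nab (cd y) (cd x) = iv (nab (cd x) (cd y))"
    using connection_sym[OF nab _ _ nbP_imp_nbM[OF xy]] xy by (simp add: mem_P)
  then show "form_of nab y x = iv (form_of nab x y)"
    using xy connection_arrow_lift[OF nab xy] nbP_sym[OF xy] by (simp add: connection_form_apply mem_P)
next
  fix x y
  assume "\<not> (x \<in> P \<and> y \<in> P \<and> nbP x y)"
  then show "form_of nab x y = undefined"
    by (rule connection_form_undefined)
next
  fix x y g
  assume xy: "x \<in> P" "y \<in> P" and "g \<in> G" "nbP x y" "nbP (cmp x g) y"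
  then show "form_of nab (cmp x g) y = cmp (iv g) (form_of nab x y)"
    using connection_arrow_lift[OF nab xy \<open>nbP x y\<close>] by (simp add: connection_form_apply mem_P mem_G)
next
  fix x y g
  assume xy: "x \<in> P" "y \<in> P" and g: "g \<in> G" and "nbP x y"
  then show "form_of nab (cmp x g) (cmp y g) = cmp (iv g) (cmp (form_of nab x y) g)"
    using connection_arrow_lift[OF nab xy \<open>nbP x y\<close>] nbP_right_action[OF xy g \<open>nbP x y\<close>]
    by (simp add: connection_form_apply mem_P mem_G)
qed

definition form_transport where
  "form_transport om x y = cmp x (cmp (om x y) (iv y))"

lemma form_transport_arrow:
  assumes "om \<in> Forms" "x \<in> P" "y \<in> P" "nbP x y"
  shows "form_transport om x y \<in> Arr" "dm (form_transport om x y) = cd y"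
    "cd (form_transport om x y) = cd x"
  using assms form_in_G[OF assms] by (simp_all add: form_transport_def mem_P mem_G)

lemma form_transport_translate_left:
  assumes "om \<in> Forms" "x \<in> P" "y \<in> P" "g \<in> G" "nbP x y" "nbP (cmp x g) y"
  shows "form_transport om (cmp x g) y = form_transport om x y"
  using assms form_in_G[OF assms(1-3,5)]
  by (simp add: form_transport_def form_translate_left mem_P mem_G)

lemma form_transport_translate_both:
  assumes "om \<in> Forms" "x \<in> P" "y \<in> P" "g \<in> G" "nbP x y"
  shows "form_transport om (cmp x g) (cmp y g) = form_transport om x y"
  using assms form_in_G[OF assms(1-3,5)]
  by (simp add: form_transport_def form_translate_both mem_P mem_G)

lemma form_transport_fibrewise:
  assumes om: "om \<in> Forms" and P: "x \<in> P" "y \<in> P" "x' \<in> P" "y' \<in> P"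
    and nb: "nbP x y" "nbP x' y'" and fibre: "cd x' = cd x" "cd y' = cd y"
  shows "form_transport om x' y' = form_transport om x y"
proof -
  define h where "h = cmp (iv y) y'"
  define x1 where "x1 = cmp x' (iv h)"
  define k where "k = cmp (iv x) x1"
  have h: "h \<in> G" "iv h \<in> G"
    using P fibre fibre_quotient_in_G by (simp_all add: h_def mem_P mem_G)
  have y': "y' = cmp y h"
    using P fibre by (simp add: h_def mem_P)
  have x': "x' = cmp x1 h"
    using P h by (simp add: x1_def mem_P mem_G)
  have x1: "x1 \<in> P" "cd x1 = cd x"
    using P fibre h by (simp_all add: x1_def)
  have k: "k \<in> G" and x1_eq: "x1 = cmp x k"
    using P x1 fibre_quotient_in_G by (simp_all add: k_def mem_P)
  have "nbP x1 y"
    using nbP_right_action[OF P(3,4) h(2) nb(2)] P h by (simp add: x1_def y' mem_P mem_G)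
  have "form_transport om x' y' = form_transport om x1 y"
    unfolding x' y' using form_transport_translate_both[OF om x1(1) P(2) h(1) \<open>nbP x1 y\<close>] .
  also have "\<dots> = form_transport om x y"
    using form_transport_translate_left[OF om P(1,2) k nb(1)] \<open>nbP x1 y\<close> by (simp add: x1_eq)
  finally show ?thesis .
qed

lemma form_transport_refl: "om \<in> Forms \<Longrightarrow> x \<in> P \<Longrightarrow> form_transport om x x = ide (cd x)"
  by (simp add: form_transport_def form_refl mem_P)

lemma form_transport_sym:
  assumes "om \<in> Forms" "x \<in> P" "y \<in> P" "nbP x y"
  shows "form_transport om y x = iv (form_transport om x y)"
  using assms form_in_G[OF assms] by (simp add: form_transport_def form_sym[OF assms] mem_P mem_G)

definition connection_of_form where
  "connection_of_form om a b =
     (if a \<in> M \<and> b \<in> M \<and> nbM a b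
      then case_prod (form_transport om) (SOME (x, y). x \<in> P \<and> y \<in> P \<and> nbP x y \<and> cd x = a \<and> cd y = b)
      else undefined)"

lemma connection_of_form_undefined:
  "\<not> (a \<in> M \<and> b \<in> M \<and> nbM a b) \<Longrightarrow> connection_of_form om a b = undefined"
  unfolding connection_of_form_def by auto

lemma connection_of_form_eq:
  assumes om: "om \<in> Forms" and xy: "x \<in> P" "y \<in> P" "nbP x y"
  shows "connection_of_form om (cd x) (cd y) = form_transport om x y"
proof -
  let ?lift = "\<lambda>(x', y'). x' \<in> P \<and> y' \<in> P \<and> nbP x' y' \<and> cd x' = cd x \<and> cd y' = cd y"
  obtain x' y' where chosen: "(SOME p. ?lift p) = (x', y')"
    using prod.exhaust by blast
  have "?lift (x, y)"
    using xy by simp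
  then have "?lift (SOME p. ?lift p)"
    by (rule someI)
  then have x'y': "x' \<in> P" "y' \<in> P" "nbP x' y'" "cd x' = cd x" "cd y' = cd y"
    unfolding chosen by simp_all
  have "cd x \<in> M" "cd y \<in> M"
    using xy by (simp_all add: mem_P)
  then have "connection_of_form om (cd x) (cd y) = form_transport om x' y'"
    using nbP_imp_nbM[OF xy] chosen by (simp add: connection_of_form_def)
  also have "\<dots> = form_transport om x y"
    using form_transport_fibrewise[OF om xy(1,2) x'y'(1,2) xy(3) x'y'(3-5)] .
  finally show ?thesis .
qed

lemma connection_of_form_in_connections:
  assumes om: "om \<in> Forms"
  shows "connection_of_form om \<in> Conns"
proof (rule connectionsI)
  fix a b
  assume "a \<in> M" "b \<in> M" "nbM a b"
  then obtain x y where xy: "x \<in> P" "y \<in> P" "nbP x y" and a: "cd x = a" and b: "cd y = b"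
    by (rule neighbour_pair_lift)
  note eq = connection_of_form_eq[OF om xy, unfolded a b]
  show "connection_of_form om a b \<in> Arr \<and> dm (connection_of_form om a b) = b \<and>
      cd (connection_of_form om a b) = a"
    using form_transport_arrow[OF om xy] a b by (simp add: eq)
  show "connection_of_form om b a = iv (connection_of_form om a b)"
    using connection_of_form_eq[OF om xy(2,1) nbP_sym[OF xy], unfolded a b]
    by (simp add: eq form_transport_sym[OF om xy])
next
  fix a
  assume "a \<in> M"
  then obtain x where x: "x \<in> P" "cd x = a"
    using bundle_surj by blast
  then show "connection_of_form om a a = ide a"
    using connection_of_form_eq[OF om x(1) x(1) nbP_refl[OF x(1)]] form_transport_refl[OF om x(1)]
    by simp
qed (rule connection_of_form_undefined)

lemma connection_form_of_connection_of_form: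
  assumes om: "om \<in> Forms"
  shows "form_of (connection_of_form om) = om"
proof (intro ext)
  fix x y
  show "form_of (connection_of_form om) x y = om x y"
  proof (cases "x \<in> P \<and> y \<in> P \<and> nbP x y")
    case True
    then have xy: "x \<in> P" "y \<in> P" "nbP x y"
      by simp_all
    then show ?thesis
      using form_in_G[OF om xy] connection_of_form_eq[OF om xy]
      by (simp add: connection_form_apply form_transport_def mem_P mem_G)
  next
    case False
    then show ?thesis
      by (simp add: connection_form_undefined form_undefined[OF om])
  qed
qed

lemma connection_of_form_connection_form:
  assumes nab: "nab \<in> Conns"
  shows "connection_of_form (form_of nab) = nab"
proof (intro ext)
  fix a b
  show "connection_of_form (form_of nab) a b = nab a b"
  proof (cases "a \<in> M \<and> b \<in> M \<and> nbM a b")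
    case True
    then obtain x y where xy: "x \<in> P" "y \<in> P" "nbP x y" and a: "cd x = a" and b: "cd y = b"
      using neighbour_pair_lift by blast
    have "connection_of_form (form_of nab) a b = form_transport (form_of nab) x y"
      using connection_of_form_eq[OF connection_form_in_equivariant_forms[OF nab] xy] a b by simp
    then show ?thesis
      using xy a b True connection_arrow[OF nab]
      by (simp add: form_transport_def connection_form_apply mem_P)
  next
    case False
    then show ?thesis
      by (simp add: connection_of_form_undefined connection_undefined[OF nab])
  qed
qed

theorem bij_betw_connection_form: "bij_betw form_of Conns Forms"
  by (rule bij_betw_byWitness[where f' = connection_of_form])
    (auto simp: connection_of_form_connection_form connection_form_of_connection_of_form
      connection_form_in_equivariant_forms connection_of_form_in_connections)

end

theorem proposition1:
  assumes "bundle_setting Obj Arr dm cd cmp ide iv M s nbM nbP"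
  shows "bij_betw (connection_form Arr dm cd cmp iv M s nbP)
           (connections Arr dm cd ide iv M nbM)
           (equivariant_forms Arr dm cd cmp ide iv M s nbP)"
  using assms by (rule principal_bundle.bij_betw_connection_form[OF principal_bundle.intro])

end
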